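(* Let $\mu$ be an integer with $h/2<\mu\le h$ and $p\in\mathcal P$. Then $D_\mu(p)=\bigcup_{\Gamma\in\mathcal C(\Gamma_\mu(p))}\max(\Gamma)\supseteq\bigcup_{\Gamma\in\mathcal A(\Gamma_\mu(p))}\max(\Gamma)\supseteq \mathrm I(\Gamma_\mu(p))$ and $|D_\mu(p)|=\sum_{\Gamma\in\mathcal C(\Gamma_\mu(p))}|\max(\Gamma)|\ge|\mathcal A(\Gamma_\mu(p))|\ge|\mathrm I(\Gamma_\mu(p))|$.
   Context: Let $n,h\ge2$, $N=\{1,\dots,n\}$, $H=\{1,\dots,h\}$, $\mathcal P$ the set of $h$-tuples of linear orders on $N$; $x>_{p_i}y$ means $x\neq y$ and $p_i$ ranks $x$ above $y$. Write $x>^p_\mu y$ if $|\{i: x>_{p_i}y\}|\ge\mu$; $D_\mu(p)=\{x\in N: \forall y,\ |\{i: y>_{p_i}x\}|<\mu\}$. The $\mu$-majority graph is the directed graph $\Gamma_\mu(p)=(N,\{(x,y): x>^p_\mu y\})$. For a directed graph $\Gamma=(V,A)$ (with $A\subseteq\{(x,y)\in V^2:x\ne y\}$): $\max(\Gamma)$ is the set of $x\in V$ with no $y$ such that $(y,x)\in A$; $\mathrm I(\Gamma)$ is the set of vertices $x$ with $(x,y),(y,x)\notin A$ for all $y\ne x$; connected components are those of the underlying undirected graph; a cycle is a subgraph on distinct vertices $x_1,\dots,x_l$ ($l\ge2$) with arcs exactly $(x_j,x_{j+1})$, $x_{l+1}=x_1$; $\Gamma$ is acyclic if it has no cycle as a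 subgraph. $\mathcal C(\Gamma_\mu(p))$ is the set of connected components of $\Gamma_\mu(p)$ and $\mathcal A(\Gamma_\mu(p))$ the set of those that are acyclic. *)

theory Defs
  imports Main
begin

(* A profile: p i is a linear order on N = {1..n} for each voter i in H = {1..h}.
   Convention: (x,y) \<in> p i means voter i ranks x at least as high as y. *)
definition profile :: "nat \<Rightarrow> nat \<Rightarrow> (nat \<Rightarrow> (nat \<times> nat) set) \<Rightarrow> bool" where
  "profile n h p \<longleftrightarrow> (\<forall>i\<in>{1..h}. linear_order_on {1..n} (p i))"

definition pref :: "(nat \<Rightarrow> (nat \<times> nat) set) \<Rightarrow> nat \<Rightarrow> nat \<Rightarrow> nat \<Rightarrow> bool" where
  "pref p i x y \<longleftrightarrow> x \<noteq> y \<and> (x, y) \<in> p i"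

definition support :: "nat \<Rightarrow> (nat \<Rightarrow> (nat \<times> nat) set) \<Rightarrow> nat \<Rightarrow> nat \<Rightarrow> nat" where
  "support h p x y = card {i \<in> {1..h}. pref p i x y}"

definition Dmu :: "nat \<Rightarrow> nat \<Rightarrow> nat \<Rightarrow> (nat \<Rightarrow> (nat \<times> nat) set) \<Rightarrow> nat set" where
  "Dmu n h \<mu> p = {x \<in> {1..n}. \<forall>y\<in>{1..n}. support h p y x < \<mu>}"

type_synonym 'a digraph = "'a set \<times> ('a \<times> 'a) set"

definition majority_graph :: "nat \<Rightarrow> nat \<Rightarrow> nat \<Rightarrow> (nat \<Rightarrow> (nat \<times> nat) set) \<Rightarrow> nat digraph" where
  "majority_graph n h \<mu> p =
     ({1..n}, {(x, y). x \<in> {1..n} \<and> y \<in> {1..n} \<and> support h p x y \<ge> \<mu>})"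

definition maxg :: "'a digraph \<Rightarrow> 'a set" where
  "maxg G = {x \<in> fst G. \<not> (\<exists>y. (y, x) \<in> snd G)}"

definition isolated :: "'a digraph \<Rightarrow> 'a set" where
  "isolated G = {x \<in> fst G. \<forall>y. y \<noteq> x \<longrightarrow> (x, y) \<notin> snd G \<and> (y, x) \<notin> snd G}"

(* connected components of the underlying undirected graph, as induced subgraphs *)
definition components :: "'a digraph \<Rightarrow> 'a digraph set" where
  "components G =
     (let V = fst G; A = snd G \<inter> (fst G \<times> fst G)
      in (\<lambda>C. (C, A \<inter> (C \<times> C))) ` (V // ((A \<union> A\<inverse>)\<^sup>*)))"

definition dg_acyclic :: "'a digraph \<Rightarrow> bool" where
  "dg_acyclic G \<longleftrightarrow>
     \<not> (\<exists>xs. distinct xs \<and> length xs \<ge> 2 \<and> set xs \<subseteq> fst G \<and>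
           (\<forall>j < length xs. (xs ! j, xs ! ((j + 1) mod length xs)) \<in> snd G))"

end

theory Submission
  imports Defs
begin

text \<open>
  By definition \<open>D\<^sub>\<mu>(p)\<close> is the set of sources of the \<open>\<mu>\<close>-majority graph. Every predecessor
  of a vertex lies in the same weakly connected component, so the sources of a graph are the
  disjoint union of the sources of its components. A finite loopless acyclic digraph has a
  source: the first vertex of a longest simple path has a predecessor, which cannot lie off the
  path (the path would extend) nor on it (it would close a cycle). An isolated vertex forms an
  acyclic one-vertex component whose only vertex is a source.
\<close>

text \<open>The restriction to \<open>V \<times> V\<close> makes this an equivalence relation on \<open>V\<close> in the sense
  of \<open>equiv\<close>; the reflexive closure alone also relates vertices outside \<open>V\<close>.\<close>

definition undirected_reach :: "'a set \<Rightarrow> ('a \<times> 'a) set \<Rightarrow> ('a \<times> 'a) set" where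
  "undirected_reach V A = (A \<union> A\<inverse>)\<^sup>* \<inter> V \<times> V"

lemma equiv_undirected_reach: "equiv V (undirected_reach V A)"
  unfolding undirected_reach_def
  by (intro equivI refl_onI sym_Int trans_Int sym_rtrancl sym_Un_converse trans_rtrancl)
     (auto simp: sym_def trans_def)

lemma rtrancl_undirected_Image_subset:
  assumes "A \<subseteq> V \<times> V" and "x \<in> V"
  shows "(A \<union> A\<inverse>)\<^sup>* `` {x} \<subseteq> V"
proof
  fix y assume "y \<in> (A \<union> A\<inverse>)\<^sup>* `` {x}"
  then have "(x, y) \<in> (A \<union> A\<inverse>)\<^sup>*" by simp
  then show "y \<in> V" by induction (use assms in auto)
qed

lemma components_eq_image_quotient:
  assumes "A \<subseteq> V \<times> V"
  shows "components (V, A) = (\<lambda>C. (C, A \<inter> C \<times> C)) ` (V // undirected_reach V A)"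
proof -
  have "(A \<union> A\<inverse>)\<^sup>* `` {x} = undirected_reach V A `` {x}" if "x \<in> V" for x
    using rtrancl_undirected_Image_subset[OF assms that] that
    unfolding undirected_reach_def by blast
  then have "V // (A \<union> A\<inverse>)\<^sup>* = V // undirected_reach V A"
    unfolding quotient_def by simp
  moreover have "A \<inter> V \<times> V = A" using assms by blast
  ultimately show ?thesis unfolding components_def Let_def by simp
qed

lemma componentE:
  assumes "A \<subseteq> V \<times> V" and "\<Gamma> \<in> components (V, A)"
  obtains C where "C \<in> V // undirected_reach V A" and "\<Gamma> = (C, A \<inter> C \<times> C)"
  using assms(2) unfolding components_eq_image_quotient[OF assms(1)] by blast

lemma maxg_component:
  assumes "A \<subseteq> V \<times> V" and "C \<in> V // undirected_reach V A"
  shows "maxg (C, A \<inter> C \<times> C) = maxg (V, A) \<inter> C"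
proof -
  have CV: "C \<subseteq> V"
    using assms(2) equiv_undirected_reach by (metis Union_quotient Union_upper)
  have "y \<in> C" if "x \<in> C" and "(y, x) \<in> A" for x y
  proof (rule in_quotient_imp_closed[OF equiv_undirected_reach assms(2) \<open>x \<in> C\<close>])
    show "(x, y) \<in> undirected_reach V A"
      using that assms(1) unfolding undirected_reach_def by blast
  qed
  then show ?thesis using CV unfolding maxg_def by auto
qed

lemma maxg_eq_Union_maxg_classes:
  assumes "A \<subseteq> V \<times> V"
  shows "maxg (V, A) = (\<Union>C\<in>V // undirected_reach V A. maxg (C, A \<inter> C \<times> C))"
proof -
  have "maxg (V, A) = (\<Union>C\<in>V // undirected_reach V A. maxg (V, A) \<inter> C)"
    using Union_quotient[OF equiv_undirected_reach, of V A] by (auto simp: maxg_def)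
  then show ?thesis using maxg_component[OF assms] by simp
qed

lemma maxg_eq_Union_maxg_components:
  assumes "A \<subseteq> V \<times> V"
  shows "maxg (V, A) = (\<Union>\<Gamma>\<in>components (V, A). maxg \<Gamma>)"
  unfolding components_eq_image_quotient[OF assms] maxg_eq_Union_maxg_classes[OF assms]
  by simp

lemma card_maxg_eq_sum_components:
  assumes "finite V" and "A \<subseteq> V \<times> V"
  shows "card (maxg (V, A)) = (\<Sum>\<Gamma>\<in>components (V, A). card (maxg \<Gamma>))"
proof -
  let ?Q = "V // undirected_reach V A"
  have "finite ?Q"
    using finite_quotient[OF assms(1)] equiv_undirected_reach by (metis equivE)
  moreover have "finite (maxg (C, A \<inter> C \<times> C))" if "C \<in> ?Q" for C
    using that assms(1) maxg_component[OF assms(2)] by (simp add: maxg_def)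
  moreover have "maxg (C, A \<inter> C \<times> C) \<inter> maxg (C', A \<inter> C' \<times> C') = {}"
    if "C \<in> ?Q" "C' \<in> ?Q" "C \<noteq> C'" for C C'
    using quotient_disj[OF equiv_undirected_reach that(1,2)] that(3) by (auto simp: maxg_def)
  ultimately have "card (maxg (V, A)) = (\<Sum>C\<in>?Q. card (maxg (C, A \<inter> C \<times> C)))"
    unfolding maxg_eq_Union_maxg_classes[OF assms(2)] by (intro card_UN_disjoint) auto
  also have "\<dots> = (\<Sum>\<Gamma>\<in>components (V, A). card (maxg \<Gamma>))"
    unfolding components_eq_image_quotient[OF assms(2)]
    by (rule sum.reindex[symmetric, unfolded comp_def]) (auto simp: inj_on_def)
  finally show ?thesis .
qed

lemma isolated_component:
  assumes "A \<subseteq> V \<times> V" and "irrefl A" and "x \<in> isolated (V, A)"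
  shows "({x}, {}) \<in> components (V, A)"
proof -
  have xV: "x \<in> V" using assms(3) by (simp add: isolated_def)
  have no_arc: "(x, z) \<notin> A \<union> A\<inverse>" for z
    using assms(2,3) by (cases "z = x") (auto simp: isolated_def irrefl_def)
  have "y = x" if "(x, y) \<in> (A \<union> A\<inverse>)\<^sup>*" for y
    using that no_arc by induction auto
  then have "undirected_reach V A `` {x} = {x}"
    using xV by (auto simp: undirected_reach_def)
  then have "{x} \<in> V // undirected_reach V A"
    using quotientI[OF xV, of "undirected_reach V A"] by simp
  moreover have "({x}, {}) = ({x}, A \<inter> {x} \<times> {x})"
    using no_arc by blast
  ultimately show ?thesis
    unfolding components_eq_image_quotient[OF assms(1)] by (rule image_eqI[rotated])
qed

lemma dg_acyclic_no_arcs: "dg_acyclic (V, {})"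
  by (auto simp: dg_acyclic_def intro: exI[of _ 0])

definition dipath :: "('a \<times> 'a) set \<Rightarrow> 'a list \<Rightarrow> bool" where
  "dipath E xs \<longleftrightarrow> distinct xs \<and> (\<forall>j. Suc j < length xs \<longrightarrow> (xs ! j, xs ! Suc j) \<in> E)"

lemma dipath_Cons:
  "y \<notin> set xs \<Longrightarrow> (y, xs ! 0) \<in> E \<Longrightarrow> dipath E xs \<Longrightarrow> dipath E (y # xs)"
  by (auto simp: dipath_def nth_Cons split: nat.splits)

lemma dipath_back_arc_not_dg_acyclic:
  assumes "dipath E xs" and "set xs \<subseteq> V"
    and "0 < m" and "m < length xs" and "(xs ! m, xs ! 0) \<in> E"
  shows "\<not> dg_acyclic (V, E)"
proof -
  define ys where "ys = take (Suc m) xs"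
  have len: "length ys = Suc m" using assms(4) by (simp add: ys_def)
  have "(ys ! j, ys ! ((j + 1) mod length ys)) \<in> E" if "j < length ys" for j
  proof (cases "j < m")
    case True
    then have "(j + 1) mod length ys = Suc j" using len by simp
    then show ?thesis using True assms(1,4) by (simp add: dipath_def ys_def)
  next
    case False
    then have "j = m" using that len by simp
    then show ?thesis using assms(5) len by (simp add: ys_def)
  qed
  moreover have "distinct ys" using assms(1) by (simp add: dipath_def ys_def)
  moreover have "set ys \<subseteq> V" using assms(2) set_take_subset[of "Suc m" xs] by (simp add: ys_def)
  moreover have "length ys \<ge> 2" using assms(3) len by simp
  ultimately show ?thesis unfolding dg_acyclic_def fst_conv snd_conv by blast
qed

lemma dg_acyclic_maxg_nonempty:
  assumes "finite V" and "V \<noteq> {}" and "E \<subseteq> V \<times> V" and "irrefl E"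
    and "dg_acyclic (V, E)"
  shows "maxg (V, E) \<noteq> {}"
proof
  assume no_source: "maxg (V, E) = {}"
  let ?P = "\<lambda>xs. dipath E xs \<and> xs \<noteq> [] \<and> set xs \<subseteq> V"
  obtain x where "x \<in> V" using assms(2) by blast
  then have "?P [x]" by (simp add: dipath_def)
  moreover have "length xs < Suc (card V)" if "?P xs" for xs
  proof -
    have "length xs = card (set xs)"
      using that by (simp add: dipath_def distinct_card)
    also have "\<dots> \<le> card V" using that assms(1) by (simp add: card_mono)
    finally show ?thesis by simp
  qed
  ultimately obtain xs
    where path: "?P xs" and longest: "\<And>ys. ?P ys \<Longrightarrow> length ys \<le> length xs"
    using ex_has_greatest_nat[of ?P "[x]" length "Suc (card V)"] by blast
  then have "xs ! 0 \<in> V" using nth_mem[of 0 xs] by auto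
  with no_source obtain y where arc: "(y, xs ! 0) \<in> E"
    unfolding maxg_def by auto
  then have "y \<in> V" using assms(3) by blast
  show False
  proof (cases "y \<in> set xs")
    case False
    then have "?P (y # xs)" using path arc \<open>y \<in> V\<close> by (simp add: dipath_Cons)
    then show False using longest[of "y # xs"] by simp
  next
    case True
    then obtain m where m: "m < length xs" "xs ! m = y" by (auto simp: in_set_conv_nth)
    have "0 < m"
    proof (rule gr0I)
      assume "m = 0"
      with arc m(2) assms(4) show False by (auto dest: irreflD)
    qed
    then have "\<not> dg_acyclic (V, E)"
      using path m arc by (intro dipath_back_arc_not_dg_acyclic[of E xs V m]) auto
    then show False using assms(5) by contradiction
  qed
qed

lemma finite_components:
  assumes "finite V" and "A \<subseteq> V \<times> V"
  shows "finite (components (V, A))"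
  using finite_quotient[OF assms(1)] equiv_undirected_reach
  unfolding components_eq_image_quotient[OF assms(2)] by (metis equivE finite_imageI)

lemma acyclic_component_maxg_nonempty:
  assumes "finite V" and "A \<subseteq> V \<times> V" and "irrefl A"
    and "\<Gamma> \<in> components (V, A)" and "dg_acyclic \<Gamma>"
  shows "maxg \<Gamma> \<noteq> {}"
proof -
  obtain C where C: "C \<in> V // undirected_reach V A" and \<Gamma>: "\<Gamma> = (C, A \<inter> C \<times> C)"
    using assms(2,4) by (rule componentE)
  have "C \<subseteq> V" using C equiv_undirected_reach by (metis Union_quotient Union_upper)
  moreover have "C \<noteq> {}" using equiv_undirected_reach C by (rule in_quotient_imp_non_empty)
  moreover have "irrefl (A \<inter> C \<times> C)" using assms(3) by (simp add: irrefl_def)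
  ultimately show ?thesis
    using assms(1,5) unfolding \<Gamma> by (intro dg_acyclic_maxg_nonempty) (auto intro: finite_subset)
qed

lemma card_acyclic_components_le_sum_card_maxg:
  assumes "finite V" and "A \<subseteq> V \<times> V" and "irrefl A"
  shows "card {\<Gamma> \<in> components (V, A). dg_acyclic \<Gamma>}
    \<le> (\<Sum>\<Gamma>\<in>components (V, A). card (maxg \<Gamma>))"
proof -
  let ?As = "{\<Gamma> \<in> components (V, A). dg_acyclic \<Gamma>}"
  have fin: "finite (components (V, A))" using assms(1,2) by (rule finite_components)
  have "finite (maxg \<Gamma>)" if "\<Gamma> \<in> components (V, A)" for \<Gamma>
    using assms(2) that
  proof (rule componentE)
    fix C assume "C \<in> V // undirected_reach V A" and "\<Gamma> = (C, A \<inter> C \<times> C)"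
    then show ?thesis
      using maxg_component[OF assms(2)] assms(1) by (simp add: maxg_def)
  qed
  then have "1 \<le> card (maxg \<Gamma>)" if "\<Gamma> \<in> ?As" for \<Gamma>
    using that acyclic_component_maxg_nonempty[OF assms] by (simp add: Suc_le_eq card_gt_0_iff)
  then have "(\<Sum>\<Gamma>\<in>?As. 1) \<le> (\<Sum>\<Gamma>\<in>?As. card (maxg \<Gamma>))"
    by (rule sum_mono)
  then have "card ?As \<le> (\<Sum>\<Gamma>\<in>?As. card (maxg \<Gamma>))" by simp
  also have "\<dots> \<le> (\<Sum>\<Gamma>\<in>components (V, A). card (maxg \<Gamma>))"
    using fin by (intro sum_mono2) auto
  finally show ?thesis .
qed

lemma isolated_subset_Union_maxg_acyclic_components:
  assumes "A \<subseteq> V \<times> V" and "irrefl A"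
  shows "isolated (V, A) \<subseteq> (\<Union>\<Gamma>\<in>{\<Gamma> \<in> components (V, A). dg_acyclic \<Gamma>}. maxg \<Gamma>)"
proof
  fix x assume "x \<in> isolated (V, A)"
  then have "({x}, {}) \<in> {\<Gamma> \<in> components (V, A). dg_acyclic \<Gamma>}"
    using isolated_component[OF assms] dg_acyclic_no_arcs by blast
  moreover have "x \<in> maxg ({x}, {})" by (simp add: maxg_def)
  ultimately show "x \<in> (\<Union>\<Gamma>\<in>{\<Gamma> \<in> components (V, A). dg_acyclic \<Gamma>}. maxg \<Gamma>)" by blast
qed

lemma card_isolated_le_card_acyclic_components:
  assumes "finite V" and "A \<subseteq> V \<times> V" and "irrefl A"
  shows "card (isolated (V, A)) \<le> card {\<Gamma> \<in> components (V, A). dg_acyclic \<Gamma>}"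
proof (rule card_inj_on_le)
  show "inj_on (\<lambda>x. ({x}, {})) (isolated (V, A))" by (simp add: inj_on_def)
  show "(\<lambda>x. ({x}, {})) ` isolated (V, A) \<subseteq> {\<Gamma> \<in> components (V, A). dg_acyclic \<Gamma>}"
    using isolated_component[OF assms(2,3)] dg_acyclic_no_arcs by blast
  show "finite {\<Gamma> \<in> components (V, A). dg_acyclic \<Gamma>}"
    using finite_components[OF assms(1,2)] by simp
qed

lemma Dmu_eq_maxg_majority_graph: "Dmu n h \<mu> p = maxg (majority_graph n h \<mu> p)"
  by (auto simp: Dmu_def maxg_def majority_graph_def simp del: atLeastAtMost_iff)

lemma irrefl_majority_graph:
  assumes "0 < \<mu>"
  shows "irrefl (snd (majority_graph n h \<mu> p))"
  using assms by (simp add: irrefl_def majority_graph_def support_def pref_def)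

theorem proposition6:
  fixes n h \<mu> :: nat and p :: "nat \<Rightarrow> (nat \<times> nat) set"
  assumes "n \<ge> 2" and "h \<ge> 2"
    and "h < 2 * \<mu>" and "\<mu> \<le> h"
    and "profile n h p"
  shows "let G = majority_graph n h \<mu> p;
             Cs = components G;
             As = {\<Gamma> \<in> Cs. dg_acyclic \<Gamma>}
         in Dmu n h \<mu> p = (\<Union>\<Gamma>\<in>Cs. maxg \<Gamma>)
            \<and> (\<Union>\<Gamma>\<in>As. maxg \<Gamma>) \<subseteq> Dmu n h \<mu> p
            \<and> isolated G \<subseteq> (\<Union>\<Gamma>\<in>As. maxg \<Gamma>)
            \<and> card (Dmu n h \<mu> p) = (\<Sum>\<Gamma>\<in>Cs. card (maxg \<Gamma>))
            \<and> (\<Sum>\<Gamma>\<in>Cs. card (maxg \<Gamma>)) \<ge> card As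
            \<and> card As \<ge> card (isolated G)"
proof -
  define A where "A = snd (majority_graph n h \<mu> p)"
  have G: "majority_graph n h \<mu> p = ({1..n}, A)"
    by (simp add: A_def majority_graph_def)
  have arcs: "A \<subseteq> {1..n} \<times> {1..n}"
    by (auto simp: A_def majority_graph_def)
  have irr: "irrefl A"
    using assms(3,4) irrefl_majority_graph by (simp add: A_def)
  have D: "Dmu n h \<mu> p = maxg ({1..n}, A)"
    using Dmu_eq_maxg_majority_graph G by simp
  show ?thesis
    unfolding Let_def G D
    using maxg_eq_Union_maxg_components[OF arcs]
      card_maxg_eq_sum_components[OF _ arcs]
      card_acyclic_components_le_sum_card_maxg[OF _ arcs irr]
      isolated_subset_Union_maxg_acyclic_components[OF arcs irr]
      card_isolated_le_card_acyclic_components[OF _ arcs irr]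
    by auto
qed

end
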